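(* Let $E\to X$ be a rank $n$ vector bundle on a nonsingular variety $X$ over an algebraically closed field, let $\nu=(\nu_1>\cdots>\nu_k>0)$ be a strict partition with $k\le n$, and set $\lambda=\nu0^{n-k}=(\nu_1,\dots,\nu_k,0,\dots,0)$. Then $$P_\lambda(E;t)=(\tau_E^k)_*\Bigl(x_1^{\nu_1}\cdots x_k^{\nu_k}\prod_{1\le i<j\le n,\ i\le k}(x_i-tx_j)\Bigr).$$
   Context: $t$ is an indeterminate, push-forwards act coefficientwise in $t$. For a sequence $\lambda$ of $n$ nonnegative integers, $R_\lambda(E;t)=(\tau_E)_*\bigl(x_1^{\lambda_1}\cdots x_n^{\lambda_n}\prod_{i<j}(x_i-tx_j)\bigr)$, where $\tau_E:Fl(E)\to X$ is the complete flag bundle of quotients of ranks $n,\dots,1$ and $(\tau_E)_*f(x)=\sum_{w\in S_n}w\bigl(f(y)/\prod_{i<j}(y_i-y_j)\bigr)$ evaluated at the Chern roots of $E$. $v_m(t)=\prod_{i=1}^m\frac{1-t^i}{1-t}$, $v_\lambda(t)=\prod_iv_{m_i}(t)$ where $m_i$ are the sizes of the level sets of $\lambda$, and $P_\lambda(E;t)=R_\lambda(E;t)/v_\lambda(t)$. $\tau_E^k:Fl^k(E)\to X$ is the flag bundle parametrizing flags of quotients of $E$ of ranks $k,k-1,\dots,1$, and for a polynomial $f$ symmetric in $y_{k+1},\dots,y_n$, $(\tau^k_E)_*f(x)=\sum_{w\in S_n/S_{n-k}}w\bigl(f(y)/\prod_{i<j,\,i\le k}(y_i-y_j)\bigr)$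 evaluated at the Chern roots of $E$. *)

theory Defs
  imports "HOL-Combinatorics.Permutations"
begin

text \<open>Chern roots are modelled as pairwise distinct elements y 0, ..., y (n-1) of a field
  of characteristic 0; variables are indexed from 0. A permutation w acts by
  (w f)(y) = f (y o w).\<close>

definition perms :: "nat \<Rightarrow> (nat \<Rightarrow> nat) set" where
  "perms n = {w. w permutes {..<n}}"

definition gysin_full ::
  "nat \<Rightarrow> ((nat \<Rightarrow> 'a::field) \<Rightarrow> 'a) \<Rightarrow> (nat \<Rightarrow> 'a) \<Rightarrow> 'a" where
  "gysin_full n f y =
     (\<Sum>w\<in>perms n. f (y \<circ> w) /
        (\<Prod>i<n. \<Prod>j\<in>{i<..<n}. (y (w i) - y (w j))))"

text \<open>Partial flag bundle push-forward: sum over the cosets w S_{n-k} of S_n/S_{n-k},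
  where S_{n-k} permutes the last n-k indices. A coset is determined by the restriction
  of w to the first k indices; we evaluate at a chosen representative (well defined
  for f symmetric in the last n-k variables).\<close>
definition cosets_k :: "nat \<Rightarrow> nat \<Rightarrow> (nat \<Rightarrow> nat) set" where
  "cosets_k n k = (\<lambda>w. restrict w {..<k}) ` perms n"

definition coset_rep :: "nat \<Rightarrow> nat \<Rightarrow> (nat \<Rightarrow> nat) \<Rightarrow> (nat \<Rightarrow> nat)" where
  "coset_rep n k c = (SOME w. w \<in> perms n \<and> restrict w {..<k} = c)"

definition gysin_partial ::
  "nat \<Rightarrow> nat \<Rightarrow> ((nat \<Rightarrow> 'a::field) \<Rightarrow> 'a) \<Rightarrow> (nat \<Rightarrow> 'a) \<Rightarrow> 'a" where
  "gysin_partial n k f y =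
     (\<Sum>c\<in>cosets_k n k. let w = coset_rep n k c in
        f (y \<circ> w) / (\<Prod>i<k. \<Prod>j\<in>{i<..<n}. (y (w i) - y (w j))))"

definition R_poly :: "nat list \<Rightarrow> 'a::field \<Rightarrow> (nat \<Rightarrow> 'a) \<Rightarrow> 'a" where
  "R_poly lam t y = gysin_full (length lam)
     (\<lambda>x. (\<Prod>i<length lam. x i ^ (lam ! i)) *
          (\<Prod>i<length lam. \<Prod>j\<in>{i<..<length lam}. (x i - t * x j))) y"

text \<open>v_m(t) = prod_{i=1}^m (1-t^i)/(1-t), written with (1-t^i)/(1-t) = sum_{j<i} t^j.\<close>
definition v_m :: "nat \<Rightarrow> 'a::field \<Rightarrow> 'a" where
  "v_m m t = (\<Prod>i\<in>{1..m}. \<Sum>j<i. t ^ j)"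

definition v_lam :: "nat list \<Rightarrow> 'a::field \<Rightarrow> 'a" where
  "v_lam lam t = (\<Prod>a\<in>set lam. v_m (count_list lam a) t)"

definition P_poly :: "nat list \<Rightarrow> 'a::field \<Rightarrow> (nat \<Rightarrow> 'a) \<Rightarrow> 'a" where
  "P_poly lam t y = R_poly lam t y / v_lam lam t"

end

theory Submission
  imports Defs "HOL-Combinatorics.Multiset_Permutations"
begin

text \<open>Group the sum over \<open>S\<^sub>n\<close> defining \<open>R\<^sub>\<lambda>\<close> along the cosets \<open>w S\<^sub>n\<^sub>-\<^sub>k\<close>. Since \<open>\<lambda>\<close> vanishes
  beyond position \<open>k\<close>, the integrand is \<open>g(x) \<Prod>\<^bsub>k\<le>i<j\<^esub> (x\<^sub>i - t x\<^sub>j)\<close> with \<open>g\<close> the integrand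
  of the partial push-forward, and the summand at \<open>w\<close> is the summand of \<open>g\<close> at the coset of
  \<open>w\<close> times \<open>\<Prod>\<^bsub>k\<le>i<j\<^esub> (y\<^sub>w\<^sub>i - t y\<^sub>w\<^sub>j) / (y\<^sub>w\<^sub>i - y\<^sub>w\<^sub>j)\<close>. Summed over a coset, the second factor
  is the symmetrisation of the Hall-Littlewood factor in the \<open>n - k\<close> remaining roots, which
  equals \<open>v\<^sub>n\<^sub>-\<^sub>k(t)\<close>; and \<open>v\<^sub>n\<^sub>-\<^sub>k(t) = v\<^sub>\<lambda>(t)\<close> because the nonzero parts of \<open>\<lambda>\<close> are distinct.

  The symmetrisation identity follows by induction on the number of roots, splitting by
  the root placed first: the weights \<open>\<Prod>\<^bsub>j\<noteq>a\<^esub> (z\<^sub>a - t z\<^sub>j) / (z\<^sub>a - z\<^sub>j)\<close> of these choices add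
  up to \<open>1 + t + \<dots> + t\<^sup>m\<^sup>-\<^sup>1\<close>. This in turn comes from the interpolation identity
  \<open>u (1 - t) \<Sum>\<^sub>a weight\<^sub>a \<Prod>\<^bsub>j\<noteq>a\<^esub> (u - z\<^sub>j) = \<Prod>\<^sub>j (u - t z\<^sub>j) - t\<^sup>m \<Prod>\<^sub>j (u - z\<^sub>j)\<close>,
  proved by adding one root at a time.\<close>

lemma prod_lessThan_split: "k \<le> (n::nat) \<Longrightarrow> prod f {..<n} = prod f {..<k} * prod f {k..<n}"
  by (simp add: lessThan_atLeast0 prod.atLeastLessThan_concat)

lemma prod_atLeastLessThan_shift: "k \<le> (n::nat) \<Longrightarrow> prod f {k..<n} = (\<Prod>i<n - k. f (k + i))"
  by (rule prod.reindex_bij_witness[where i="\<lambda>i. k + i" and j="\<lambda>i. i - k"]) auto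

lemma prod_greaterThanLessThan_shift:
  "k \<le> (n::nat) \<Longrightarrow> prod f {k + i<..<n} = (\<Prod>j\<in>{i<..<n - k}. f (k + j))"
  by (rule prod.reindex_bij_witness[where i="\<lambda>i. k + i" and j="\<lambda>i. i - k"]) auto

lemma permutes_image_atLeastLessThan:
  fixes n k :: nat
  assumes "w permutes {..<n}" "k \<le> n"
  shows "w ` {k..<n} = {..<n} - w ` {..<k}"
proof -
  have "w ` {k..<n} = w ` ({..<n} - {..<k})"
    using assms(2) by (intro arg_cong[where f="image w"]) auto
  also have "\<dots> = w ` {..<n} - w ` {..<k}"
    by (rule image_set_diff[OF permutes_inj[OF assms(1)]])
  finally show ?thesis using permutes_image[OF assms(1)] by simp
qed

lemma card_permutes_image_complement:
  fixes n k :: nat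
  assumes "w permutes {..<n}" "k \<le> n"
  shows "card ({..<n} - w ` {..<k}) = n - k"
  using permutes_image_atLeastLessThan[OF assms, symmetric]
  by (simp add: card_image permutes_inj_on[OF assms(1)])

lemma prod_greaterThanLessThan_permutes:
  fixes n k i :: nat
  assumes w: "w permutes {..<n}" and "i < k" "k \<le> n"
  shows "(\<Prod>j\<in>{i<..<n}. h (w j)) = (\<Prod>j\<in>{i<..<k}. h (w j)) * (\<Prod>v\<in>{..<n} - w ` {..<k}. h v)"
proof -
  have "{i<..<n} = {i<..<k} \<union> {k..<n}" "{i<..<k} \<inter> {k..<n} = {}" using assms by auto
  then have "(\<Prod>j\<in>{i<..<n}. h (w j)) = (\<Prod>j\<in>{i<..<k}. h (w j)) * (\<Prod>j\<in>{k..<n}. h (w j))"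
    by (simp add: prod.union_disjoint)
  also have "(\<Prod>j\<in>{k..<n}. h (w j)) = (\<Prod>v\<in>w ` {k..<n}. h v)"
    by (simp add: prod.reindex permutes_inj_on[OF w])
  finally show ?thesis using permutes_image_atLeastLessThan[OF w \<open>k \<le> n\<close>] by simp
qed

lemma permutes_extend_prefix:
  fixes n k :: nat
  assumes w0: "w0 permutes {..<n}" and kn: "k \<le> n"
    and xs: "xs \<in> permutations_of_set ({..<n} - w0 ` {..<k})"
  shows "(\<lambda>m. if m < k then w0 m else if m < n then xs ! (m - k) else m) permutes {..<n}"
    (is "?w permutes _")
proof (rule bij_imp_permutes)
  have set_xs: "set xs = {..<n} - w0 ` {..<k}" and "distinct xs"
    using xs by (auto dest: permutations_of_setD)
  then have len: "length xs = n - k"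
    using card_permutes_image_complement[OF w0 kn] by (metis distinct_card)
  have tail: "?w ` {k..<n} = set xs"
  proof (intro equalityI subsetI)
    fix v assume "v \<in> ?w ` {k..<n}"
    then show "v \<in> set xs" using len by auto
  next
    fix v assume "v \<in> set xs"
    then obtain i where "i < n - k" "v = xs ! i" using len by (auto simp: in_set_conv_nth)
    then show "v \<in> ?w ` {k..<n}" by (intro image_eqI[where x="k + i"]) auto
  qed
  have "{..<n} = {..<k} \<union> {k..<n}" using kn by auto
  then have "?w ` {..<n} = ?w ` {..<k} \<union> ?w ` {k..<n}" by (metis image_Un)
  also have "\<dots> = {..<n}"
    using tail set_xs permutes_image[OF w0] kn by auto
  finally have image: "?w ` {..<n} = {..<n}" .
  then have "inj_on ?w {..<n}" by (simp add: inj_on_iff_eq_card)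
  then show "bij_betw ?w {..<n} {..<n}" using image by (simp add: bij_betw_def)
qed (use kn in auto)

definition first_factor :: "(nat \<Rightarrow> 'a::field) \<Rightarrow> 'a \<Rightarrow> nat set \<Rightarrow> nat \<Rightarrow> 'a" where
  "first_factor z t A a = (\<Prod>j\<in>A - {a}. (z a - t * z j) / (z a - z j))"

lemma first_factor_insert_other:
  fixes z :: "nat \<Rightarrow> 'a::field"
  assumes "finite A" "b \<notin> A" "a \<in> A" "z a \<noteq> z b"
  shows "first_factor z t (insert b A) a
           = first_factor z t A a - (1 - t) * z b * (first_factor z t A a / (z b - z a))"
proof -
  have "insert b A - {a} = insert b (A - {a})" using assms by auto
  then have "first_factor z t (insert b A) a
               = first_factor z t A a * ((z a - t * z b) / (z a - z b))"
    unfolding first_factor_def using assms by (simp add: mult.commute)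
  then show ?thesis using assms(4) by (simp add: field_simps)
qed

text \<open>The interpolation identity for \<open>A\<close> determines the weight of a new point \<open>b\<close>: evaluate
  it at \<open>u = z b\<close>.\<close>
lemma first_factor_insert_self:
  fixes z :: "nat \<Rightarrow> 'a::field"
  assumes fin: "finite A" and b: "b \<notin> A" and inj: "inj_on z (insert b A)"
    and interp: "\<And>u. u * (1 - t) * (\<Sum>a\<in>A. first_factor z t A a * (\<Prod>j\<in>A - {a}. u - z j))
                     = (\<Prod>j\<in>A. u - t * z j) - t ^ card A * (\<Prod>j\<in>A. u - z j)"
  shows "first_factor z t (insert b A) b
           = t ^ card A + (1 - t) * z b * (\<Sum>a\<in>A. first_factor z t A a / (z b - z a))"
proof -
  have zb: "z b \<noteq> z a" if "a \<in> A" for a using inj b that by (auto simp: inj_on_def)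
  define P where "P = (\<Prod>j\<in>A. z b - z j)"
  have P_nz: "P \<noteq> 0" unfolding P_def using fin zb by simp
  have P_remove: "P = (z b - z a) * (\<Prod>j\<in>A - {a}. z b - z j)" if "a \<in> A" for a
    unfolding P_def using fin that by (simp add: prod.remove)
  have "(\<Sum>a\<in>A. first_factor z t A a * (\<Prod>j\<in>A - {a}. z b - z j))
          = P * (\<Sum>a\<in>A. first_factor z t A a / (z b - z a))"
    unfolding sum_distrib_left using zb by (intro sum.cong) (simp_all add: P_remove)
  then have "(\<Prod>j\<in>A. z b - t * z j)
               = P * (t ^ card A + (1 - t) * z b * (\<Sum>a\<in>A. first_factor z t A a / (z b - z a)))"
    using interp[of "z b"] unfolding P_def by (simp add: algebra_simps)
  moreover have "first_factor z t (insert b A) b = (\<Prod>j\<in>A. z b - t * z j) / P"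
    unfolding first_factor_def P_def using fin b by (simp add: prod_dividef)
  ultimately show ?thesis using P_nz by simp
qed

lemma first_factor_interpolation:
  fixes z :: "nat \<Rightarrow> 'a::field"
  assumes "finite A" "inj_on z A"
  shows "u * (1 - t) * (\<Sum>a\<in>A. first_factor z t A a * (\<Prod>j\<in>A - {a}. u - z j))
           = (\<Prod>j\<in>A. u - t * z j) - t ^ card A * (\<Prod>j\<in>A. u - z j)"
  using assms
proof (induction A arbitrary: u rule: finite_induct)
  case empty
  then show ?case by simp
next
  case (insert b A)
  have zb: "z a \<noteq> z b" if "a \<in> A" for a
    using insert.prems insert.hyps that by (auto simp: inj_on_def)
  have IH: "\<And>u. u * (1 - t) * (\<Sum>a\<in>A. first_factor z t A a * (\<Prod>j\<in>A - {a}. u - z j))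
                 = (\<Prod>j\<in>A. u - t * z j) - t ^ card A * (\<Prod>j\<in>A. u - z j)"
    using insert.IH insert.prems by (simp add: inj_on_insert)
  define m where "m = card A"
  define S where "S = (\<Sum>a\<in>A. first_factor z t A a * (\<Prod>j\<in>A - {a}. u - z j))"
  define P where "P = (\<Prod>j\<in>A. u - z j)"
  define K where "K = (\<Sum>a\<in>A. first_factor z t A a / (z b - z a))"
  have term_a: "first_factor z t (insert b A) a * (\<Prod>j\<in>insert b A - {a}. u - z j)
      = (u - t * z b) * (first_factor z t A a * (\<Prod>j\<in>A - {a}. u - z j))
        - (1 - t) * z b * P * (first_factor z t A a / (z b - z a))" if a: "a \<in> A" for a
  proof -
    have "insert b A - {a} = insert b (A - {a})" using a insert.hyps by auto
    moreover have P_a: "P = (u - z a) * (\<Prod>j\<in>A - {a}. u - z j)"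
      unfolding P_def using a insert.hyps by (simp add: prod.remove)
    ultimately show ?thesis
      unfolding P_a using zb[OF a] insert.hyps a
      by (simp add: first_factor_insert_other field_simps)
  qed
  have "(\<Sum>a\<in>insert b A. first_factor z t (insert b A) a * (\<Prod>j\<in>insert b A - {a}. u - z j))
      = first_factor z t (insert b A) b * P + ((u - t * z b) * S - (1 - t) * z b * P * K)"
    using insert.hyps term_a
    by (simp add: P_def S_def K_def sum_subtractf sum_distrib_left)
  also have "\<dots> = t ^ m * P + (u - t * z b) * S"
    unfolding first_factor_insert_self[OF insert.hyps insert.prems IH]
    by (simp add: m_def K_def algebra_simps)
  finally have sum_eq: "(\<Sum>a\<in>insert b A. first_factor z t (insert b A) a
                                  * (\<Prod>j\<in>insert b A - {a}. u - z j))
      = t ^ m * P + (u - t * z b) * S" .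
  have "u * (1 - t) * (t ^ m * P + (u - t * z b) * S)
      = t ^ m * u * (1 - t) * P + (u - t * z b) * (u * (1 - t) * S)"
    by (simp add: algebra_simps)
  also have "\<dots> = t ^ m * u * (1 - t) * P + (u - t * z b) * ((\<Prod>j\<in>A. u - t * z j) - t ^ m * P)"
    unfolding S_def P_def m_def IH ..
  also have "\<dots> = (u - t * z b) * (\<Prod>j\<in>A. u - t * z j) - t ^ Suc m * ((u - z b) * P)"
    by (simp add: algebra_simps)
  finally show ?case unfolding sum_eq using insert.hyps by (simp add: P_def m_def)
qed

lemma sum_first_factor:
  fixes z :: "nat \<Rightarrow> 'a::field"
  assumes "finite A" "inj_on z A"
  shows "(\<Sum>a\<in>A. first_factor z t A a) = (\<Sum>r<card A. t ^ r)"
  using assms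
proof (induction A rule: finite_induct)
  case empty
  then show ?case by simp
next
  case (insert b A)
  have injA: "inj_on z A" using insert.prems by (simp add: inj_on_insert)
  have zb: "z a \<noteq> z b" if "a \<in> A" for a
    using insert.prems insert.hyps that by (auto simp: inj_on_def)
  define K where "K = (\<Sum>a\<in>A. first_factor z t A a / (z b - z a))"
  have "(\<Sum>a\<in>insert b A. first_factor z t (insert b A) a)
      = first_factor z t (insert b A) b + (\<Sum>a\<in>A. first_factor z t (insert b A) a)"
    using insert.hyps by simp
  also have "(\<Sum>a\<in>A. first_factor z t (insert b A) a)
      = (\<Sum>a\<in>A. first_factor z t A a) - (1 - t) * z b * K"
    using insert.hyps zb
    by (simp add: K_def first_factor_insert_other sum_subtractf sum_distrib_left)
  also have "first_factor z t (insert b A) b = t ^ card A + (1 - t) * z b * K"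
    unfolding K_def
    using first_factor_insert_self[OF insert.hyps insert.prems first_factor_interpolation[OF insert.hyps(1) injA]] .
  finally show ?case using insert.IH[OF injA] insert.hyps by simp
qed

lemma v_m_Suc: "v_m (Suc m) t = v_m m t * (\<Sum>r<Suc m. t ^ r)"
  by (simp add: v_m_def prod.cl_ivl_Suc)

fun hl_ratio :: "(nat \<Rightarrow> 'a::field) \<Rightarrow> 'a \<Rightarrow> nat list \<Rightarrow> 'a" where
  "hl_ratio z t [] = 1"
| "hl_ratio z t (a # xs) = (\<Prod>b\<in>set xs. (z a - t * z b) / (z a - z b)) * hl_ratio z t xs"

lemma sum_permutations_of_set_hl_ratio:
  fixes z :: "nat \<Rightarrow> 'a::field"
  assumes "finite B" "inj_on z B"
  shows "(\<Sum>xs\<in>permutations_of_set B. hl_ratio z t xs) = v_m (card B) t"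
  using assms
proof (induction "card B" arbitrary: B)
  case 0
  then show ?case by (simp add: v_m_def)
next
  case (Suc m)
  then have ne: "B \<noteq> {}" by auto
  have IH: "(\<Sum>xs\<in>permutations_of_set (B - {a}). hl_ratio z t xs) = v_m m t" if "a \<in> B" for a
    using Suc.hyps(1)[of "B - {a}"] Suc.hyps(2)[symmetric] Suc.prems that by (simp add: inj_on_diff)
  have "(\<Sum>xs\<in>permutations_of_set B. hl_ratio z t xs)
      = (\<Sum>a\<in>B. \<Sum>xs\<in>(#) a ` permutations_of_set (B - {a}). hl_ratio z t xs)"
    unfolding permutations_of_set_nonempty[OF ne]
    by (rule sum.UNION_disjoint) (use Suc.prems in auto)
  also have "\<dots> = (\<Sum>a\<in>B. \<Sum>xs\<in>permutations_of_set (B - {a}). hl_ratio z t (a # xs))"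
    by (rule sum.cong[OF refl], subst sum.reindex) (auto simp: inj_on_def)
  also have "\<dots> = (\<Sum>a\<in>B. first_factor z t B a * v_m m t)"
    by (intro sum.cong refl)
       (auto simp: IH[symmetric] sum_distrib_left first_factor_def permutations_of_set_def
             intro!: sum.cong)
  also have "\<dots> = (\<Sum>a\<in>B. first_factor z t B a) * v_m m t"
    by (simp add: sum_distrib_right)
  also have "\<dots> = v_m (Suc m) t"
    using sum_first_factor[OF Suc.prems] Suc.hyps(2)[symmetric] by (simp add: v_m_Suc)
  finally show ?case using Suc.hyps(2) by simp
qed

lemma hl_ratio_conv_nth:
  fixes z :: "nat \<Rightarrow> 'a::field"
  assumes "distinct xs"
  shows "hl_ratio z t xs = (\<Prod>i<length xs. \<Prod>j\<in>{i<..<length xs}.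
                              (z (xs ! i) - t * z (xs ! j)) / (z (xs ! i) - z (xs ! j)))"
  using assms
proof (induction xs)
  case Nil
  then show ?case by simp
next
  case (Cons a xs)
  let ?G = "\<lambda>p q. (z p - t * z q) / (z p - z q)"
  have shift: "{Suc i<..<Suc (length xs)} = Suc ` {i<..<length xs}" for i
    by (simp flip: atLeastSucLessThan_greaterThanLessThan)
  have shift0: "{0<..<Suc (length xs)} = Suc ` {..<length xs}"
    by (simp add: lessThan_atLeast0 flip: atLeastSucLessThan_greaterThanLessThan)
  have head: "(\<Prod>j\<in>{0<..<Suc (length xs)}. ?G a ((a # xs) ! j)) = (\<Prod>b\<in>set xs. ?G a b)"
  proof -
    have "(\<Prod>j\<in>{0<..<Suc (length xs)}. ?G a ((a # xs) ! j)) = (\<Prod>j<length xs. ?G a (xs ! j))"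
      unfolding shift0 by (subst prod.reindex) auto
    also have "\<dots> = (\<Prod>b\<in>set xs. ?G a b)"
      using Cons.prems by (simp add: prod.distinct_set_conv_list prod.list_conv_set_nth atLeast0LessThan)
    finally show ?thesis .
  qed
  have "(\<Prod>i<length (a # xs). \<Prod>j\<in>{i<..<length (a # xs)}. ?G ((a # xs) ! i) ((a # xs) ! j))
      = (\<Prod>j\<in>{0<..<Suc (length xs)}. ?G a ((a # xs) ! j))
        * (\<Prod>i<length xs. \<Prod>j\<in>{Suc i<..<Suc (length xs)}. ?G (xs ! i) ((a # xs) ! j))"
    by (simp only: length_Cons prod.lessThan_Suc_shift nth_Cons_0 nth_Cons_Suc)
  also have "(\<Prod>i<length xs. \<Prod>j\<in>{Suc i<..<Suc (length xs)}. ?G (xs ! i) ((a # xs) ! j))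
      = (\<Prod>i<length xs. \<Prod>j\<in>{i<..<length xs}. ?G (xs ! i) (xs ! j))"
    unfolding shift by (rule prod.cong[OF refl], subst prod.reindex) auto
  finally show ?case using Cons head by simp
qed

definition tail_ratio :: "nat \<Rightarrow> nat \<Rightarrow> 'a::field \<Rightarrow> (nat \<Rightarrow> 'a) \<Rightarrow> (nat \<Rightarrow> nat) \<Rightarrow> 'a" where
  "tail_ratio n k t y w =
     (\<Prod>i\<in>{k..<n}. \<Prod>j\<in>{i<..<n}. (y (w i) - t * y (w j)) / (y (w i) - y (w j)))"

lemma tail_ratio_eq_hl_ratio:
  assumes "k \<le> n" "inj_on w {k..<n}"
  shows "tail_ratio n k t y w = hl_ratio y t (map w [k..<n])"
  using assms
  by (auto simp: tail_ratio_def hl_ratio_conv_nth distinct_map prod_atLeastLessThan_shift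
                 prod_greaterThanLessThan_shift intro!: prod.cong)

definition coset_fiber :: "nat \<Rightarrow> nat \<Rightarrow> (nat \<Rightarrow> nat) \<Rightarrow> (nat \<Rightarrow> nat) set" where
  "coset_fiber n k c = {w \<in> perms n. restrict w {..<k} = c}"

lemma coset_rep_in_coset_fiber:
  assumes "c \<in> cosets_k n k"
  shows "coset_rep n k c \<in> coset_fiber n k c"
proof -
  have "\<exists>w. w \<in> perms n \<and> restrict w {..<k} = c" using assms by (auto simp: cosets_k_def)
  from someI_ex[OF this] show ?thesis unfolding coset_rep_def coset_fiber_def by simp
qed

lemma sum_coset_fiber_tail_ratio:
  fixes y :: "nat \<Rightarrow> 'a::field"
  assumes kn: "k \<le> n" and roots: "inj_on y {..<n}" and c: "c \<in> cosets_k n k"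
  shows "(\<Sum>w\<in>coset_fiber n k c. tail_ratio n k t y w) = v_m (n - k) t"
proof -
  obtain w0 where w0: "w0 permutes {..<n}" and cw: "c = restrict w0 {..<k}"
    using c by (auto simp: cosets_k_def perms_def)
  define B where "B = {..<n} - w0 ` {..<k}"
  have fiber: "w \<in> coset_fiber n k c \<longleftrightarrow> w permutes {..<n} \<and> (\<forall>i<k. w i = w0 i)" for w
    unfolding coset_fiber_def perms_def cw by (auto simp: fun_eq_iff)
  define extend where
    "extend xs = (\<lambda>m. if m < k then w0 m else if m < n then xs ! (m - k) else m)" for xs :: "nat list"
  have "(\<Sum>w\<in>coset_fiber n k c. tail_ratio n k t y w) = (\<Sum>xs\<in>permutations_of_set B. hl_ratio y t xs)"
  proof (rule sum.reindex_bij_witness[where i=extend and j="\<lambda>w. map w [k..<n]"])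
    fix w assume "w \<in> coset_fiber n k c"
    then have w: "w permutes {..<n}" and agree: "\<And>i. i < k \<Longrightarrow> w i = w0 i" by (auto simp: fiber)
    show "extend (map w [k..<n]) = w"
    proof
      fix m show "extend (map w [k..<n]) m = w m"
        using agree permutes_not_in[OF w, of m] by (simp add: extend_def)
    qed
    have "set (map w [k..<n]) = B"
      using permutes_image_atLeastLessThan[OF w kn] agree by (auto simp: B_def)
    moreover have "distinct (map w [k..<n])"
      using permutes_inj_on[OF w] by (simp add: distinct_map)
    ultimately show "map w [k..<n] \<in> permutations_of_set B"
      by (simp add: permutations_of_set_def)
    show "hl_ratio y t (map w [k..<n]) = tail_ratio n k t y w"
      by (rule tail_ratio_eq_hl_ratio[OF kn permutes_inj_on[OF w], symmetric])
  next
    fix xs assume xs: "xs \<in> permutations_of_set B"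
    then have "length xs = n - k"
      using card_permutes_image_complement[OF w0 kn]
      by (metis B_def distinct_card permutations_of_setD)
    then show "map (extend xs) [k..<n] = xs" by (intro nth_equalityI) (auto simp: extend_def)
    show "extend xs \<in> coset_fiber n k c"
      using permutes_extend_prefix[OF w0 kn xs[unfolded B_def]] by (simp add: fiber extend_def)
  qed
  also have "\<dots> = v_m (n - k) t"
    using sum_permutations_of_set_hl_ratio[of B y t] roots card_permutes_image_complement[OF w0 kn]
    by (simp add: B_def inj_on_diff)
  finally show ?thesis .
qed

definition head_term ::
  "nat \<Rightarrow> nat \<Rightarrow> ((nat \<Rightarrow> 'a) \<Rightarrow> 'a) \<Rightarrow> (nat \<Rightarrow> 'a) \<Rightarrow> (nat \<Rightarrow> nat) \<Rightarrow> 'a::field" where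
  "head_term n k f y w = f (y \<circ> w) / (\<Prod>i<k. \<Prod>j\<in>{i<..<n}. y (w i) - y (w j))"

lemma head_term_eq_if_prefix_eq:
  fixes y :: "nat \<Rightarrow> 'a::field"
  assumes w: "w permutes {..<n}" and w': "w' permutes {..<n}" and kn: "k \<le> n"
    and agree: "\<And>i. i < k \<Longrightarrow> w i = w' i"
  shows "head_term n k (\<lambda>x. (\<Prod>i<k. x i ^ e i) * (\<Prod>i<k. \<Prod>j\<in>{i<..<n}. x i - t * x j)) y w
       = head_term n k (\<lambda>x. (\<Prod>i<k. x i ^ e i) * (\<Prod>i<k. \<Prod>j\<in>{i<..<n}. x i - t * x j)) y w'"
proof -
  have "w ` {..<k} = w' ` {..<k}" using agree by auto
  have rows: "(\<Prod>j\<in>{i<..<n}. f (w i) (w j)) = (\<Prod>j\<in>{i<..<n}. f (w' i) (w' j))"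
    if "i < k" for i and f :: "nat \<Rightarrow> nat \<Rightarrow> 'a"
  proof -
    have "(\<Prod>j\<in>{i<..<k}. f (w' i) (w j)) = (\<Prod>j\<in>{i<..<k}. f (w' i) (w' j))"
      using agree by (intro prod.cong) auto
    with \<open>w ` {..<k} = w' ` {..<k}\<close> show ?thesis
      using prod_greaterThanLessThan_permutes[OF w that kn, of "f (w' i)"]
        prod_greaterThanLessThan_permutes[OF w' that kn, of "f (w' i)"] agree[OF that]
      by simp
  qed
  have pairs: "(\<Prod>i<k. \<Prod>j\<in>{i<..<n}. y (w i) - c * y (w j))
      = (\<Prod>i<k. \<Prod>j\<in>{i<..<n}. y (w' i) - c * y (w' j))" for c
    using rows[where f="\<lambda>a b. y a - c * y b"] by (rule prod.cong[OF refl]) simp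
  have "(\<Prod>i<k. y (w i) ^ e i) = (\<Prod>i<k. y (w' i) ^ e i)"
    using agree by (intro prod.cong) auto
  with pairs[of t] pairs[of 1] show ?thesis
    unfolding head_term_def o_def by simp
qed

lemma gysin_full_split_summand:
  assumes "k \<le> n"
  shows "g (y \<circ> w) * (\<Prod>i\<in>{k..<n}. \<Prod>j\<in>{i<..<n}. (y \<circ> w) i - t * (y \<circ> w) j)
           / (\<Prod>i<n. \<Prod>j\<in>{i<..<n}. y (w i) - y (w j))
         = head_term n k g y w * tail_ratio n k t y w"
proof -
  have "(\<Prod>i<n. \<Prod>j\<in>{i<..<n}. y (w i) - y (w j))
      = (\<Prod>i<k. \<Prod>j\<in>{i<..<n}. y (w i) - y (w j)) * (\<Prod>i\<in>{k..<n}. \<Prod>j\<in>{i<..<n}. y (w i) - y (w j))"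
    by (rule prod_lessThan_split[OF assms])
  then show ?thesis unfolding head_term_def tail_ratio_def by (simp add: prod_dividef)
qed

lemma gysin_full_eq_v_m_gysin_partial:
  fixes y :: "nat \<Rightarrow> 'a::field"
  assumes kn: "k \<le> n" and roots: "inj_on y {..<n}"
    and prefix: "\<And>w w'. w \<in> perms n \<Longrightarrow> w' \<in> perms n \<Longrightarrow> (\<And>i. i < k \<Longrightarrow> w i = w' i)
                   \<Longrightarrow> head_term n k g y w = head_term n k g y w'"
  shows "gysin_full n (\<lambda>x. g x * (\<Prod>i\<in>{k..<n}. \<Prod>j\<in>{i<..<n}. x i - t * x j)) y
       = v_m (n - k) t * gysin_partial n k g y"
proof -
  have fin: "finite (perms n)" unfolding perms_def by (simp add: finite_permutations)
  have head_eq: "head_term n k g y w = head_term n k g y (coset_rep n k c)"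
    if c: "c \<in> cosets_k n k" and w: "w \<in> coset_fiber n k c" for c w
  proof (rule prefix)
    have rep: "coset_rep n k c \<in> coset_fiber n k c" by (rule coset_rep_in_coset_fiber[OF c])
    then show "w \<in> perms n" "coset_rep n k c \<in> perms n" using w by (simp_all add: coset_fiber_def)
    fix i assume "i < k"
    then show "w i = coset_rep n k c i"
      using w rep unfolding coset_fiber_def by (metis (mono_tags) mem_Collect_eq lessThan_iff restrict_apply')
  qed
  have "gysin_full n (\<lambda>x. g x * (\<Prod>i\<in>{k..<n}. \<Prod>j\<in>{i<..<n}. x i - t * x j)) y
      = (\<Sum>w\<in>perms n. head_term n k g y w * tail_ratio n k t y w)"
    unfolding gysin_full_def gysin_full_split_summand[OF kn] ..
  also have "\<dots> = (\<Sum>c\<in>cosets_k n k. \<Sum>w\<in>coset_fiber n k c. head_term n k g y w * tail_ratio n k t y w)"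
    unfolding coset_fiber_def
    by (rule sum.group[symmetric, OF fin]) (auto simp: cosets_k_def fin)
  also have "\<dots> = (\<Sum>c\<in>cosets_k n k. head_term n k g y (coset_rep n k c) * v_m (n - k) t)"
    by (intro sum.cong refl)
       (simp add: head_eq sum_distrib_left[symmetric] sum_coset_fiber_tail_ratio[OF kn roots]
             cong: sum.cong)
  also have "\<dots> = v_m (n - k) t * gysin_partial n k g y"
    by (simp add: gysin_partial_def head_term_def Let_def sum_distrib_left mult.commute)
  finally show ?thesis .
qed

lemma v_lam_append_zeros:
  assumes "distinct nu" "0 \<notin> set nu"
  shows "v_lam (nu @ replicate m 0) t = v_m m (t::'a::field)"
proof -
  let ?l = "nu @ replicate m 0"
  have count_nu: "count_list nu a = 1" if "a \<in> set nu" for a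
    using assms(1) that by (induction nu) auto
  have "v_lam ?l t = (\<Prod>a\<in>set ?l. if a = 0 then v_m m t else 1)"
    unfolding v_lam_def using assms(2) count_nu count_notin[of 0 nu]
    by (intro prod.cong refl) (auto simp: count_list_eq_length_filter v_m_def)
  also have "\<dots> = v_m m t" by (cases m) (auto simp: v_m_def)
  finally show ?thesis .
qed

lemma prod_power_append_zeros:
  assumes "length nu \<le> n"
  shows "(\<Prod>i<n. x i ^ ((nu @ replicate (n - length nu) 0) ! i)) = (\<Prod>i<length nu. x i ^ (nu ! i))"
proof -
  let ?e = "\<lambda>i. (nu @ replicate (n - length nu) 0) ! i"
  have "(\<Prod>i<n. x i ^ ?e i) = (\<Prod>i<length nu. x i ^ ?e i) * (\<Prod>i\<in>{length nu..<n}. x i ^ ?e i)"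
    by (rule prod_lessThan_split[OF assms])
  also have "(\<Prod>i\<in>{length nu..<n}. x i ^ ?e i) = 1"
    by (intro prod.neutral) (auto simp: nth_append)
  also have "(\<Prod>i<length nu. x i ^ ?e i) = (\<Prod>i<length nu. x i ^ (nu ! i))"
    by (intro prod.cong) (auto simp: nth_append)
  finally show ?thesis by simp
qed

theorem mainTheorem4:
  fixes n :: nat and nu :: "nat list" and t :: "'a::field_char_0" and y :: "nat \<Rightarrow> 'a"
  assumes strict: "sorted_wrt (>) nu"
    and pos: "\<forall>a\<in>set nu. 0 < a"
    and kn: "length nu \<le> n"
    and roots: "inj_on y {..<n}"
    and vnz: "v_lam (nu @ replicate (n - length nu) 0) t \<noteq> 0"
  shows "P_poly (nu @ replicate (n - length nu) 0) t y =
         gysin_partial n (length nu)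
           (\<lambda>x. (\<Prod>i<length nu. x i ^ (nu ! i)) *
                (\<Prod>i<length nu. \<Prod>j\<in>{i<..<n}. (x i - t * x j))) y"
proof -
  define k where "k = length nu"
  define lam where "lam = nu @ replicate (n - k) 0"
  define g where "g = (\<lambda>x. (\<Prod>i<k. x i ^ (nu ! i)) * (\<Prod>i<k. \<Prod>j\<in>{i<..<n}. x i - t * x j))"
  have "k \<le> n" using kn by (simp add: k_def)
  have "distinct nu" using strict by (induction nu) auto
  have len: "length lam = n" using \<open>k \<le> n\<close> by (simp add: lam_def k_def)
  have integrand: "(\<Prod>i<n. x i ^ (lam ! i)) * (\<Prod>i<n. \<Prod>j\<in>{i<..<n}. x i - t * x j)
                 = g x * (\<Prod>i\<in>{k..<n}. \<Prod>j\<in>{i<..<n}. x i - t * x j)" for x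
    using prod_power_append_zeros[OF kn, of x]
      prod_lessThan_split[OF \<open>k \<le> n\<close>, of "\<lambda>i. \<Prod>j\<in>{i<..<n}. x i - t * x j"]
    by (simp add: lam_def g_def k_def)
  have prefix: "head_term n k g y w = head_term n k g y w'"
    if "w \<in> perms n" "w' \<in> perms n" "\<And>i. i < k \<Longrightarrow> w i = w' i" for w w'
    unfolding g_def using that \<open>k \<le> n\<close> by (intro head_term_eq_if_prefix_eq) (simp_all add: perms_def)
  have "R_poly lam t y = gysin_full n (\<lambda>x. g x * (\<Prod>i\<in>{k..<n}. \<Prod>j\<in>{i<..<n}. x i - t * x j)) y"
    unfolding R_poly_def len integrand ..
  also have "\<dots> = v_m (n - k) t * gysin_partial n k g y"
    by (rule gysin_full_eq_v_m_gysin_partial[OF \<open>k \<le> n\<close> roots prefix])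
  finally have "R_poly lam t y = v_m (n - k) t * gysin_partial n k g y" .
  moreover have "v_lam lam t = v_m (n - k) t"
    unfolding lam_def using \<open>distinct nu\<close> pos by (intro v_lam_append_zeros) auto
  ultimately show ?thesis using vnz unfolding P_poly_def lam_def g_def k_def by simp
qed

end
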